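(* Let $N=U\oplus\langle 4\rangle\oplus E_8(2)$ and $N'=\langle 2\rangle\oplus U(2)\oplus E_8$. Then $$\mathcal{D}(N)/\mathrm{O}(N)\cong\mathcal{D}(N')/\mathrm{O}(N').$$
   Context: Lattice conventions: $U$ is the even unimodular lattice of signature $(1,1)$; $E_8$ is the negative definite root lattice; $\langle m\rangle$ is generated by a vector of norm $m$; $L(m)$ is $L$ with its bilinear form multiplied by the rational number $m$. For a lattice $N$ of signature $(2,n)$, $\mathcal{D}(N)=\{[\omega]\in\mathbb{P}(N\otimes\mathbb{C}) : \omega\cdot\omega=0,\ \omega\cdot\bar\omega>0\}$, with the action of the orthogonal group $\mathrm{O}(N)$. *)

theory Defs
  imports Complex_Main
begin

text \<open>Lattices of rank 11 are modelled as \<open>\<int>^11\<close> (coordinates indexed by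
  \<open>0..10\<close>, functions \<open>nat \<Rightarrow> _\<close> vanishing outside \<open>{..<11}\<close>) equipped with
  an integral symmetric Gram matrix \<open>G :: nat \<Rightarrow> nat \<Rightarrow> int\<close>.\<close>

definition rk :: nat where "rk = 11"

text \<open>E8 Dynkin diagram on nodes 3..10: chain 3-4-5-6-7-8-9, node 10 attached to 7
  (arms of lengths 4,2,1 at the branch node 7).\<close>
definition e8_edge :: "nat \<Rightarrow> nat \<Rightarrow> bool" where
  "e8_edge i j \<longleftrightarrow> (3 \<le> i \<and> i \<le> 8 \<and> j = i + 1) \<or> (3 \<le> j \<and> j \<le> 8 \<and> i = j + 1)
      \<or> (i = 7 \<and> j = 10) \<or> (i = 10 \<and> j = 7)"

definition in_e8 :: "nat \<Rightarrow> bool" where "in_e8 i \<longleftrightarrow> 3 \<le> i \<and> i \<le> 10"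

text \<open>Cartan matrix of E8 (positive definite); the negative definite lattice \<open>E_8\<close>
  has Gram matrix \<open>- cartan_E8\<close>.\<close>
definition cartan_E8 :: "nat \<Rightarrow> nat \<Rightarrow> int" where
  "cartan_E8 i j = (if i = j then 2 else if e8_edge i j then -1 else 0)"

text \<open>\<open>N = U \<oplus> \<langle>4\<rangle> \<oplus> E_8(2)\<close>: U on coordinates 0,1; \<open>\<langle>4\<rangle>\<close> on 2; \<open>E_8(2)\<close> on 3..10.\<close>
definition gramN :: "nat \<Rightarrow> nat \<Rightarrow> int" where
  "gramN i j =
    (if (i = 0 \<and> j = 1) \<or> (i = 1 \<and> j = 0) then 1
     else if i = 2 \<and> j = 2 then 4
     else if in_e8 i \<and> in_e8 j then - 2 * cartan_E8 i j
     else 0)"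

text \<open>\<open>N' = \<langle>2\<rangle> \<oplus> U(2) \<oplus> E_8\<close>: \<open>\<langle>2\<rangle>\<close> on 0; \<open>U(2)\<close> on 1,2; \<open>E_8\<close> on 3..10.\<close>
definition gramN' :: "nat \<Rightarrow> nat \<Rightarrow> int" where
  "gramN' i j =
    (if i = 0 \<and> j = 0 then 2
     else if (i = 1 \<and> j = 2) \<or> (i = 2 \<and> j = 1) then 2
     else if in_e8 i \<and> in_e8 j then - cartan_E8 i j
     else 0)"

definition bil :: "(nat \<Rightarrow> nat \<Rightarrow> int) \<Rightarrow> (nat \<Rightarrow> complex) \<Rightarrow> (nat \<Rightarrow> complex) \<Rightarrow> complex" where
  "bil G x y = (\<Sum>i<rk. \<Sum>j<rk. of_int (G i j) * x i * y j)"

definition supported :: "(nat \<Rightarrow> 'a::zero) \<Rightarrow> bool" where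
  "supported x \<longleftrightarrow> (\<forall>i\<ge>rk. x i = 0)"

definition matsupp :: "(nat \<Rightarrow> nat \<Rightarrow> 'a::zero) \<Rightarrow> bool" where
  "matsupp g \<longleftrightarrow> (\<forall>i j. rk \<le> i \<or> rk \<le> j \<longrightarrow> g i j = 0)"

definition matmul :: "(nat \<Rightarrow> nat \<Rightarrow> 'a::comm_semiring_1) \<Rightarrow> (nat \<Rightarrow> nat \<Rightarrow> 'a) \<Rightarrow> nat \<Rightarrow> nat \<Rightarrow> 'a" where
  "matmul a b = (\<lambda>i j. if i < rk \<and> j < rk then (\<Sum>k<rk. a i k * b k j) else 0)"

definition idmat :: "nat \<Rightarrow> nat \<Rightarrow> 'a::zero_neq_one" where
  "idmat = (\<lambda>i j. if i < rk \<and> i = j then 1 else 0)"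

definition Orth :: "(nat \<Rightarrow> nat \<Rightarrow> int) \<Rightarrow> (nat \<Rightarrow> nat \<Rightarrow> int) set" where
  "Orth G = {g. matsupp g \<and>
      (\<exists>h. matsupp h \<and> matmul g h = idmat \<and> matmul h g = idmat) \<and>
      (\<forall>i<rk. \<forall>j<rk. (\<Sum>k<rk. \<Sum>l<rk. g k i * G k l * g l j) = G i j)}"

definition act :: "(nat \<Rightarrow> nat \<Rightarrow> int) \<Rightarrow> (nat \<Rightarrow> complex) \<Rightarrow> nat \<Rightarrow> complex" where
  "act g x = (\<lambda>i. if i < rk then (\<Sum>j<rk. of_int (g i j) * x j) else 0)"

definition cact :: "(nat \<Rightarrow> nat \<Rightarrow> complex) \<Rightarrow> (nat \<Rightarrow> complex) \<Rightarrow> nat \<Rightarrow> complex" where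
  "cact A x = (\<lambda>i. if i < rk then (\<Sum>j<rk. A i j * x j) else 0)"

text \<open>Affine cone over the period domain \<open>\<D>(N)\<close>: vectors \<open>\<omega>\<close> with
  \<open>\<omega>\<cdot>\<omega> = 0\<close> and \<open>\<omega>\<cdot>\<omega>\<^sup>\<dagger> > 0\<close> (the latter is automatically real).
  Points of \<open>\<D>(N)\<close> are the lines \<open>[\<omega>]\<close> of such vectors.\<close>
definition Dcone :: "(nat \<Rightarrow> nat \<Rightarrow> int) \<Rightarrow> (nat \<Rightarrow> complex) set" where
  "Dcone G = {w. supported w \<and> bil G w w = 0 \<and> Re (bil G w (\<lambda>i. cnj (w i))) > 0}"

text \<open>\<open>[\<omega>]\<close> and \<open>[\<omega>']\<close> lie in the same \<open>O(N)\<close>-orbit of \<open>\<D>(N)\<close>.\<close>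
definition same_orbit :: "(nat \<Rightarrow> nat \<Rightarrow> int) \<Rightarrow> (nat \<Rightarrow> complex) \<Rightarrow> (nat \<Rightarrow> complex) \<Rightarrow> bool" where
  "same_orbit G w w' \<longleftrightarrow> (\<exists>g\<in>Orth G. \<exists>c::complex. c \<noteq> 0 \<and> w' = (\<lambda>i. c * act g w i))"

end

theory Submission
  imports Defs
begin

(* The two period domains are identified by an explicit rational similitude.
   Over Q the lattice N(1/2) = U(1/2) + <2> + E8 is isometric to N' = <2> + U(2) + E8:
   send the <4>-coordinate of N to the <2>-coordinate of N', halve the two
   U-coordinates and keep the E8-coordinates.  The resulting complex matrix A
   satisfies A^T G' A = (1/2) G, so it maps the cone over D(N) onto the cone over
   D(N'), and A O(N) A^-1 = O(N') because conjugation by A keeps integral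
   matrices integral in both directions.  The latter is a parity statement:
   elements of O(N) have even entries in the (U-rows, other columns) block, and
   elements of O(N') have even entries in the U(2)-columns outside the U(2)-rows
   (this uses that E8 is unimodular, and that the U(2)-columns are isotropic). *)

section \<open>Matrix calculus on rank-11 matrices\<close>

definition trp :: "(nat \<Rightarrow> nat \<Rightarrow> 'a) \<Rightarrow> nat \<Rightarrow> nat \<Rightarrow> 'a" where
  "trp M = (\<lambda>i j. M j i)"

definition ofm :: "(nat \<Rightarrow> nat \<Rightarrow> int) \<Rightarrow> nat \<Rightarrow> nat \<Rightarrow> complex" where
  "ofm g = (\<lambda>i j. of_int (g i j))"

definition smul :: "complex \<Rightarrow> (nat \<Rightarrow> nat \<Rightarrow> complex) \<Rightarrow> nat \<Rightarrow> nat \<Rightarrow> complex" where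
  "smul c M = (\<lambda>i j. c * M i j)"

lemma matmul_assoc: "matmul (matmul a b) c = matmul a (matmul b c)"
proof (intro ext)
  fix i j
  show "matmul (matmul a b) c i j = matmul a (matmul b c) i j"
  proof (cases "i < rk \<and> j < rk")
    case True
    have "(\<Sum>k<rk. (\<Sum>m<rk. a i m * b m k) * c k j) = (\<Sum>k<rk. \<Sum>m<rk. a i m * b m k * c k j)"
      by (simp add: sum_distrib_right)
    also have "\<dots> = (\<Sum>m<rk. \<Sum>k<rk. a i m * b m k * c k j)" by (rule sum.swap)
    also have "\<dots> = (\<Sum>m<rk. a i m * (\<Sum>k<rk. b m k * c k j))"
      by (simp add: sum_distrib_left mult.assoc)
    finally show ?thesis using True unfolding matmul_def by simp
  qed (auto simp: matmul_def)
qed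

lemma matsupp_matmul: "matsupp (matmul a b)"
  unfolding matsupp_def matmul_def by auto

lemma matsupp_eqI: "matsupp M \<Longrightarrow> matsupp G \<Longrightarrow> (\<And>i j. i < rk \<Longrightarrow> j < rk \<Longrightarrow> M i j = G i j) \<Longrightarrow> M = G"
  unfolding matsupp_def by (intro ext) (metis not_le)

lemma matmul_id_left: "matsupp a \<Longrightarrow> matmul idmat a = a"
  unfolding matsupp_def matmul_def idmat_def
  by (auto intro!: ext simp: if_distrib[where f="\<lambda>x. x * _"] sum.delta cong: if_cong)

lemma matmul_id_right: "matsupp a \<Longrightarrow> matmul a idmat = a"
  unfolding matsupp_def matmul_def idmat_def
  by (auto intro!: ext simp: if_distrib[where f="\<lambda>x. _ * x"] sum.delta' cong: if_cong)

lemma trp_matmul: "trp (matmul a (b :: nat \<Rightarrow> nat \<Rightarrow> 'a::comm_semiring_1)) = matmul (trp b) (trp a)"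
  unfolding trp_def matmul_def by (auto intro!: ext sum.cong simp: mult.commute)

lemma trp_id: "trp idmat = idmat"
  unfolding trp_def idmat_def by (auto intro!: ext)

lemma ofm_matmul: "ofm (matmul a b) = matmul (ofm a) (ofm b)"
  unfolding ofm_def matmul_def by (auto intro!: ext)

lemma ofm_trp: "ofm (trp a) = trp (ofm a)"
  unfolding ofm_def trp_def by auto

lemma ofm_id: "ofm idmat = idmat"
  unfolding ofm_def idmat_def by (auto intro!: ext)

lemma ofm_inj: "ofm a = ofm b \<Longrightarrow> a = b"
  unfolding ofm_def by (intro ext) (metis of_int_eq_iff)

lemma matsupp_ofm: "matsupp (ofm a) \<longleftrightarrow> matsupp a"
  unfolding ofm_def matsupp_def by auto

lemma smul_left: "matmul (smul c a) b = smul c (matmul a b)"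
  unfolding smul_def matmul_def by (auto intro!: ext simp: sum_distrib_left mult.assoc)

lemma smul_right: "matmul a (smul c b) = smul c (matmul a b)"
  unfolding smul_def matmul_def
  by (auto intro!: ext simp: sum_distrib_left mult.assoc mult.left_commute)

lemma smul_smul: "smul c (smul d a) = smul (c * d) a"
  unfolding smul_def by (auto simp: mult.assoc)

lemma smul_one: "smul 1 a = a"
  unfolding smul_def by simp

lemma integral_matrix:
  assumes supp: "matsupp M" and ints: "\<And>i j. i < rk \<Longrightarrow> j < rk \<Longrightarrow> M i j \<in> \<int>"
  shows "\<exists>g. ofm g = M"
proof
  have all: "\<exists>k. M i j = of_int k" for i j
  proof (cases "i < rk \<and> j < rk")
    case True
    then show ?thesis using ints by (metis Ints_cases)
  next
    case False
    then have "M i j = of_int 0" using supp unfolding matsupp_def by auto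
    then show ?thesis by blast
  qed
  show "ofm (\<lambda>i j. SOME k. M i j = of_int k) = M"
    unfolding ofm_def by (intro ext) (metis (mono_tags) someI_ex all)
qed

lemma cact_matmul: "cact (matmul a b) x = cact a (cact b x)"
proof (rule ext)
  fix i
  have "(\<Sum>j<rk. (\<Sum>k<rk. a i k * b k j) * x j) = (\<Sum>j<rk. \<Sum>k<rk. a i k * b k j * x j)"
    by (simp add: sum_distrib_right)
  also have "\<dots> = (\<Sum>k<rk. \<Sum>j<rk. a i k * b k j * x j)" by (rule sum.swap)
  also have "\<dots> = (\<Sum>k<rk. a i k * (\<Sum>j<rk. b k j * x j))"
    by (simp add: sum_distrib_left mult.assoc)
  finally show "cact (matmul a b) x i = cact a (cact b x) i"
    unfolding cact_def matmul_def by simp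
qed

lemma cact_id: "supported x \<Longrightarrow> cact idmat x = x"
  unfolding cact_def idmat_def supported_def
  by (auto intro!: ext simp: if_distrib[where f="\<lambda>x. x * _"] sum.delta cong: if_cong)

lemma act_cact: "act g x = cact (ofm g) x"
  unfolding act_def cact_def ofm_def by simp

lemma cact_scal: "cact a (\<lambda>i. c * x i) = (\<lambda>i. c * cact a x i)"
  unfolding cact_def by (auto intro!: ext simp: sum_distrib_left mult.left_commute)

lemma supported_cact: "supported (cact a x)"
  unfolding supported_def cact_def by auto

lemma cnj_cact:
  assumes "\<And>i j. cnj (X i j) = X i j"
  shows "(\<lambda>i. cnj (cact X w i)) = cact X (\<lambda>i. cnj (w i))"
  unfolding cact_def using assms by (auto intro!: ext)

definition dot :: "(nat \<Rightarrow> complex) \<Rightarrow> (nat \<Rightarrow> complex) \<Rightarrow> complex" where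
  "dot x y = (\<Sum>i<rk. x i * y i)"

lemma bil_dot: "bil G x y = dot x (cact (ofm G) y)"
  unfolding bil_def dot_def cact_def ofm_def
  by (simp add: sum_distrib_left mult.commute mult.left_commute)

lemma dot_cact: "dot (cact X x) z = dot x (cact (trp X) z)"
proof -
  have "dot (cact X x) z = (\<Sum>i<rk. \<Sum>j<rk. X i j * x j * z i)"
    unfolding dot_def cact_def by (simp add: sum_distrib_right)
  also have "\<dots> = (\<Sum>j<rk. \<Sum>i<rk. X i j * x j * z i)" by (rule sum.swap)
  also have "\<dots> = dot x (cact (trp X) z)"
    unfolding dot_def cact_def trp_def
    by (simp add: sum_distrib_left mult.commute mult.left_commute)
  finally show ?thesis .
qed

lemma dot_smul: "dot x (cact (smul c M) y) = c * dot x (cact M y)"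
  unfolding dot_def cact_def smul_def
  by (simp add: sum_distrib_left mult.commute mult.left_commute)

section \<open>Orthogonal groups and similitudes\<close>

lemma Orth_iff:
  assumes "matsupp G"
  shows "g \<in> Orth G \<longleftrightarrow> matsupp g \<and>
    (\<exists>h. matsupp h \<and> matmul g h = idmat \<and> matmul h g = idmat) \<and> matmul (matmul (trp g) G) g = G"
proof -
  have entry: "matmul (matmul (trp g) G) g i j = (\<Sum>k<rk. \<Sum>l<rk. g k i * G k l * g l j)"
    if "i < rk" "j < rk" for i j
  proof -
    have "matmul (matmul (trp g) G) g i j = (\<Sum>l<rk. \<Sum>k<rk. g k i * G k l * g l j)"
      using that unfolding matmul_def trp_def by (simp add: sum_distrib_right)
    also have "\<dots> = (\<Sum>k<rk. \<Sum>l<rk. g k i * G k l * g l j)" by (rule sum.swap)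
    finally show ?thesis .
  qed
  show ?thesis
    unfolding Orth_def using matsupp_eqI[OF matsupp_matmul assms] entry by auto
qed

lemma Orth_inverse:
  assumes G: "matsupp G" and g: "g \<in> Orth G"
    and h: "matsupp h" "matmul g h = idmat" "matmul h g = idmat"
  shows "h \<in> Orth G"
proof -
  have f: "matmul (matmul (trp g) G) g = G" and gs: "matsupp g" using g G by (auto simp: Orth_iff)
  have "matmul (matmul (trp h) G) h = matmul (matmul (trp h) (matmul (matmul (trp g) G) g)) h"
    using f by simp
  also have "\<dots> = matmul (matmul (trp (matmul g h)) G) (matmul g h)"
    by (simp add: trp_matmul matmul_assoc)
  also have "\<dots> = G" using h G by (simp add: trp_id matmul_id_left matmul_id_right)
  finally show ?thesis using h gs G by (auto simp: Orth_iff)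
qed

text \<open>For \<open>g \<in> O(G)\<close> with inverse \<open>h\<close>: \<open>G g = h\<^sup>T G\<close>.  This is the source of all
  parity constraints below.\<close>
lemma Orth_gram_commute:
  assumes G: "matsupp G" and g: "g \<in> Orth G"
    and h: "matsupp h" "matmul g h = idmat" "matmul h g = idmat"
  shows "matmul G g = matmul (trp h) G"
proof -
  have f: "matmul (matmul (trp g) G) g = G" using g G by (auto simp: Orth_iff)
  have "matmul (trp h) G = matmul (trp h) (matmul (matmul (trp g) G) g)" using f by simp
  also have "\<dots> = matmul (matmul (trp (matmul g h)) G) g" by (simp add: trp_matmul matmul_assoc)
  also have "\<dots> = matmul G g" using h G by (simp add: trp_id matmul_id_left)
  finally show ?thesis by simp
qed

lemma similitude_inverse:
  fixes X Y G1 G2 :: "nat \<Rightarrow> nat \<Rightarrow> complex"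
  assumes XY: "matmul X Y = idmat" "matmul Y X = idmat" and G2: "matsupp G2"
    and F: "matmul (matmul (trp X) G2) X = smul c G1" and c: "c \<noteq> 0"
  shows "matmul (matmul (trp Y) G1) Y = smul (1/c) G2"
proof -
  have "G2 = matmul (matmul (trp (matmul X Y)) G2) (matmul X Y)"
    using XY G2 by (simp add: trp_id matmul_id_left matmul_id_right)
  also have "\<dots> = matmul (matmul (trp Y) (matmul (matmul (trp X) G2) X)) Y"
    by (simp add: trp_matmul matmul_assoc)
  also have "\<dots> = smul c (matmul (matmul (trp Y) G1) Y)"
    by (simp add: F smul_left smul_right)
  finally have "smul (1/c) G2 = smul (1/c) (smul c (matmul (matmul (trp Y) G1) Y))" by simp
  then show ?thesis using c by (simp add: smul_smul smul_one)
qed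

lemma conjugate_in_Orth:
  fixes X Y :: "nat \<Rightarrow> nat \<Rightarrow> complex"
  assumes XY: "matmul X Y = idmat" "matmul Y X = idmat" and X: "matsupp X"
    and G1: "matsupp G1" and G2: "matsupp G2"
    and F: "matmul (matmul (trp X) (ofm G2)) X = smul c (ofm G1)" and c: "c \<noteq> 0"
    and g: "g \<in> Orth G1" and h: "matsupp h" "matmul g h = idmat" "matmul h g = idmat"
    and g2: "ofm g2 = matmul (matmul X (ofm g)) Y" and h2: "ofm h2 = matmul (matmul X (ofm h)) Y"
  shows "g2 \<in> Orth G2"
proof -
  have gs: "matsupp g" and f: "matmul (matmul (trp g) G1) g = G1" using g G1 by (auto simp: Orth_iff)
  have fc: "matmul (matmul (trp (ofm g)) (ofm G1)) (ofm g) = ofm G1"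
    using f by (metis ofm_matmul ofm_trp)
  have T: "matmul (matmul (trp Y) (ofm G1)) Y = smul (1/c) (ofm G2)"
    by (rule similitude_inverse[OF XY _ F c]) (simp add: G2 matsupp_ofm)
  have s2: "matsupp g2" and sh2: "matsupp h2"
    using matsupp_matmul g2 h2 by (metis matsupp_ofm)+
  have "ofm (matmul g2 h2) = matmul (matmul X (matmul (ofm g) (matmul (matmul Y X) (ofm h)))) Y"
    by (simp add: ofm_matmul g2 h2 matmul_assoc)
  also have "\<dots> = matmul X Y"
    using XY X h by (simp add: matmul_id_right matmul_id_left matsupp_ofm ofm_matmul[symmetric] ofm_id)
  finally have i1: "matmul g2 h2 = idmat" using XY by (metis ofm_id ofm_inj)
  have "ofm (matmul h2 g2) = matmul (matmul X (matmul (ofm h) (matmul (matmul Y X) (ofm g)))) Y"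
    by (simp add: ofm_matmul g2 h2 matmul_assoc)
  also have "\<dots> = matmul X Y"
    using XY X h gs by (simp add: matmul_id_right matmul_id_left matsupp_ofm ofm_matmul[symmetric] ofm_id)
  finally have i2: "matmul h2 g2 = idmat" using XY by (metis ofm_id ofm_inj)
  have "ofm (matmul (matmul (trp g2) G2) g2) =
     matmul (matmul (trp Y) (matmul (matmul (trp (ofm g)) (matmul (matmul (trp X) (ofm G2)) X)) (ofm g))) Y"
    by (simp add: ofm_matmul ofm_trp g2 trp_matmul matmul_assoc)
  also have "\<dots> = smul c (matmul (matmul (trp Y) (ofm G1)) Y)"
    by (simp add: F smul_left smul_right fc)
  also have "\<dots> = ofm G2" using c by (simp add: T smul_smul smul_one)
  finally have "matmul (matmul (trp g2) G2) g2 = G2" by (rule ofm_inj)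
  then show ?thesis using s2 sh2 i1 i2 G2 by (auto simp: Orth_iff)
qed

lemma same_orbit_transport:
  fixes X Y :: "nat \<Rightarrow> nat \<Rightarrow> complex"
  assumes XY: "matmul X Y = idmat" "matmul Y X = idmat" and X: "matsupp X"
    and G1: "matsupp G1" and G2: "matsupp G2"
    and F: "matmul (matmul (trp X) (ofm G2)) X = smul c (ofm G1)" and c: "c \<noteq> 0"
    and integral: "\<And>g. g \<in> Orth G1 \<Longrightarrow> \<exists>g2. ofm g2 = matmul (matmul X (ofm g)) Y"
    and orbit: "same_orbit G1 w w'"
  shows "same_orbit G2 (cact X w) (cact X w')"
proof -
  obtain g k where g: "g \<in> Orth G1" and k: "k \<noteq> 0" and w': "w' = (\<lambda>i. k * act g w i)"
    using orbit unfolding same_orbit_def by auto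
  obtain h where h: "matsupp h" "matmul g h = idmat" "matmul h g = idmat"
    using g unfolding Orth_def by auto
  obtain g2 where g2: "ofm g2 = matmul (matmul X (ofm g)) Y" using integral[OF g] by blast
  obtain h2 where h2: "ofm h2 = matmul (matmul X (ofm h)) Y"
    using integral[OF Orth_inverse[OF G1 g h]] by blast
  have g2O: "g2 \<in> Orth G2" by (rule conjugate_in_Orth[OF XY X G1 G2 F c g h g2 h2])
  have "act g2 (cact X w) = cact (matmul (matmul X (ofm g)) (matmul Y X)) w"
    by (simp add: act_cact g2 cact_matmul)
  also have "\<dots> = cact X (act g w)"
    by (simp add: XY matmul_id_right matsupp_matmul cact_matmul act_cact)
  finally have "cact X w' = (\<lambda>i. k * act g2 (cact X w) i)"
    by (simp add: w' cact_scal)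
  then show ?thesis unfolding same_orbit_def using g2O k by blast
qed

lemma same_orbit_iff_transport:
  fixes X Y :: "nat \<Rightarrow> nat \<Rightarrow> complex"
  assumes XY: "matmul X Y = idmat" "matmul Y X = idmat" and X: "matsupp X" and Y: "matsupp Y"
    and G1: "matsupp G1" and G2: "matsupp G2"
    and F: "matmul (matmul (trp X) (ofm G2)) X = smul c (ofm G1)" and c: "c \<noteq> 0"
    and integral: "\<And>g. g \<in> Orth G1 \<Longrightarrow> \<exists>g2. ofm g2 = matmul (matmul X (ofm g)) Y"
    and integral': "\<And>g. g \<in> Orth G2 \<Longrightarrow> \<exists>g1. ofm g1 = matmul (matmul Y (ofm g)) X"
    and w: "supported w" "supported w'"
  shows "same_orbit G1 w w' \<longleftrightarrow> same_orbit G2 (cact X w) (cact X w')"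
proof
  assume orbit: "same_orbit G1 w w'"
  show "same_orbit G2 (cact X w) (cact X w')"
    by (rule same_orbit_transport[OF XY X G1 G2 F c integral orbit])
next
  have F': "matmul (matmul (trp Y) (ofm G1)) Y = smul (1/c) (ofm G2)"
    by (rule similitude_inverse[OF XY _ F c]) (simp add: G2 matsupp_ofm)
  have c': "1/c \<noteq> 0" using c by simp
  have round_trip: "cact Y (cact X v) = v" if "supported v" for v
    using that XY by (metis cact_id cact_matmul)
  assume orbit: "same_orbit G2 (cact X w) (cact X w')"
  have "same_orbit G1 (cact Y (cact X w)) (cact Y (cact X w'))"
    by (rule same_orbit_transport[OF XY(2,1) Y G2 G1 F' c' integral' orbit])
  then show "same_orbit G1 w w'" using round_trip w by simp
qed

lemma bil_similitude:
  assumes F: "matmul (matmul (trp X) (ofm G2)) X = smul c (ofm G1)"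
  shows "bil G2 (cact X x) (cact X y) = c * bil G1 x y"
proof -
  have "bil G2 (cact X x) (cact X y) = dot x (cact (trp X) (cact (ofm G2) (cact X y)))"
    by (simp add: bil_dot dot_cact)
  also have "\<dots> = dot x (cact (matmul (matmul (trp X) (ofm G2)) X) y)"
    by (simp add: cact_matmul)
  also have "\<dots> = c * bil G1 x y" by (simp add: F dot_smul bil_dot)
  finally show ?thesis .
qed

lemma Dcone_transport:
  assumes F: "matmul (matmul (trp X) (ofm G2)) X = smul (of_real r) (ofm G1)" and r: "r > 0"
    and real: "\<And>i j. cnj (X i j) = X i j" and w: "supported w"
  shows "w \<in> Dcone G1 \<longleftrightarrow> cact X w \<in> Dcone G2"
  using w r unfolding Dcone_def
  by (simp add: supported_cact cnj_cact[OF real] bil_similitude[OF F] zero_less_mult_iff)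

section \<open>The coordinate change from \<open>N\<close> to \<open>N'\<close>\<close>

text \<open>Coordinate \<open>i\<close> of \<open>N'\<close> is \<open>scale i\<close> times coordinate \<open>sigma i\<close> of \<open>N\<close>:
  the \<open>\<langle>4\<rangle>\<close>-coordinate 2 becomes the \<open>\<langle>2\<rangle>\<close>-coordinate 0, the \<open>U\<close>-coordinates 0, 1
  become the halved \<open>U(2)\<close>-coordinates 1, 2, and \<open>E\<^sub>8\<close> is kept.\<close>
definition sigma :: "nat \<Rightarrow> nat" where
  "sigma i = (if i = 0 then 2 else if i = 1 then 0 else if i = 2 then 1 else i)"

definition sigma_inv :: "nat \<Rightarrow> nat" where
  "sigma_inv i = (if i = 2 then 0 else if i = 0 then 1 else if i = 1 then 2 else i)"

definition scale :: "nat \<Rightarrow> complex" where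
  "scale i = (if i = 1 \<or> i = 2 then 1/2 else 1)"

definition Amat :: "nat \<Rightarrow> nat \<Rightarrow> complex" where
  "Amat i j = (if i < rk \<and> j = sigma i then scale i else 0)"

definition Bmat :: "nat \<Rightarrow> nat \<Rightarrow> complex" where
  "Bmat i j = (if j < rk \<and> i = sigma j then 1 / scale j else 0)"

lemma sigma_lt: "i < rk \<Longrightarrow> sigma i < rk"
  unfolding sigma_def rk_def by auto

lemma sigma_inv_lt: "i < rk \<Longrightarrow> sigma_inv i < rk"
  unfolding sigma_inv_def rk_def by auto

lemma sigma_sigma_inv: "sigma (sigma_inv i) = i"
  unfolding sigma_def sigma_inv_def by auto

lemma sigma_inv_sigma: "sigma_inv (sigma i) = i"
  unfolding sigma_def sigma_inv_def by auto

lemma sigma_inj: "sigma i = sigma j \<longleftrightarrow> i = j"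
  by (metis sigma_inv_sigma)

lemma sigma_eq_iff: "(k < rk \<and> j = sigma k) \<longleftrightarrow> (j < rk \<and> k = sigma_inv j)"
  unfolding sigma_def sigma_inv_def rk_def by auto

lemma scale_nonzero: "scale i \<noteq> 0"
  unfolding scale_def by auto

lemma Amat_entry_col: "k < rk \<Longrightarrow> Amat k j = (if j < rk \<and> k = sigma_inv j then scale (sigma_inv j) else 0)"
  unfolding Amat_def using sigma_eq_iff by auto

lemma Bmat_entry_row: "k < rk \<Longrightarrow> Bmat i k = (if i < rk \<and> k = sigma_inv i then 1 / scale (sigma_inv i) else 0)"
  unfolding Bmat_def using sigma_eq_iff by auto

lemma Amat_row: "(\<Sum>k<rk. Amat i k * f k) = (if i < rk then scale i * f (sigma i) else 0)"
  unfolding Amat_def using sigma_lt by (auto simp: if_distrib[where f="\<lambda>x. x * _"] cong: if_cong)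

lemma Amat_col: "(\<Sum>k<rk. f k * Amat k j) = (if j < rk then f (sigma_inv j) * scale (sigma_inv j) else 0)"
proof -
  have "(\<Sum>k<rk. f k * Amat k j) =
      (\<Sum>k<rk. if k = sigma_inv j then (if j < rk then f k * scale (sigma_inv j) else 0) else 0)"
    by (rule sum.cong) (auto simp: Amat_entry_col)
  then show ?thesis using sigma_inv_lt by simp
qed

lemma Bmat_row: "(\<Sum>k<rk. Bmat i k * f k) = (if i < rk then f (sigma_inv i) / scale (sigma_inv i) else 0)"
proof -
  have "(\<Sum>k<rk. Bmat i k * f k) =
      (\<Sum>k<rk. if k = sigma_inv i then (if i < rk then f k / scale (sigma_inv i) else 0) else 0)"
    by (rule sum.cong) (auto simp: Bmat_entry_row)
  then show ?thesis using sigma_inv_lt by simp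
qed

lemma Bmat_col: "(\<Sum>k<rk. f k * Bmat k j) = (if j < rk then f (sigma j) / scale j else 0)"
  unfolding Bmat_def using sigma_lt by (auto simp: if_distrib[where f="\<lambda>x. _ * x"] cong: if_cong)

lemma Amat_Bmat: "matmul Amat Bmat = idmat"
  unfolding matmul_def idmat_def
  by (intro ext) (auto simp: Amat_row Bmat_def scale_nonzero sigma_lt sigma_inj)

lemma Bmat_Amat: "matmul Bmat Amat = idmat"
  unfolding matmul_def idmat_def
  by (intro ext) (auto simp: Amat_col Bmat_def scale_nonzero sigma_inv_lt sigma_sigma_inv)

lemma matsupp_Amat: "matsupp Amat"
  unfolding matsupp_def Amat_def using sigma_lt by (auto simp: not_le[symmetric])

lemma matsupp_Bmat: "matsupp Bmat"
  unfolding matsupp_def Bmat_def using sigma_lt by (auto simp: not_le[symmetric])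

lemma Amat_real: "cnj (Amat i j) = Amat i j"
  unfolding Amat_def scale_def by auto

lemma matsupp_gramN: "matsupp gramN"
  unfolding matsupp_def gramN_def in_e8_def rk_def by auto

lemma matsupp_gramN': "matsupp gramN'"
  unfolding matsupp_def gramN'_def in_e8_def rk_def by auto

lemma Amat_similitude: "matmul (matmul (trp Amat) (ofm gramN')) Amat = smul (1/2) (ofm gramN)"
proof (rule matsupp_eqI[OF matsupp_matmul])
  show "matsupp (smul (1/2) (ofm gramN))"
    using matsupp_gramN unfolding matsupp_def smul_def ofm_def by auto
next
  fix i j assume ij: "i < rk" "j < rk"
  have entries: "of_int (gramN' (sigma_inv i) (sigma_inv j)) * scale (sigma_inv i) * scale (sigma_inv j)
      = (1/2 :: complex) * of_int (gramN i j)"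
    using ij unfolding rk_def sigma_inv_def scale_def gramN_def gramN'_def in_e8_def cartan_E8_def
    by auto
  have inner: "(\<Sum>k<rk. Amat k i * ofm gramN' k l) = ofm gramN' (sigma_inv i) l * scale (sigma_inv i)" for l
    using Amat_col[of "\<lambda>k. ofm gramN' k l" i] ij by (simp add: mult.commute)
  have "matmul (matmul (trp Amat) (ofm gramN')) Amat i j
      = (\<Sum>l<rk. (ofm gramN' (sigma_inv i) l * scale (sigma_inv i)) * Amat l j)"
    using ij unfolding matmul_def trp_def by (simp add: inner)
  also have "\<dots> = ofm gramN' (sigma_inv i) (sigma_inv j) * scale (sigma_inv i) * scale (sigma_inv j)"
    using Amat_col[of "\<lambda>l. ofm gramN' (sigma_inv i) l * scale (sigma_inv i)" j] ij by simp
  also have "\<dots> = smul (1/2) (ofm gramN) i j"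
    using entries unfolding smul_def ofm_def by simp
  finally show "matmul (matmul (trp Amat) (ofm gramN')) Amat i j = smul (1/2) (ofm gramN) i j" .
qed

lemma Amat_conj_entry:
  assumes "a < rk" "b < rk"
  shows "matmul (matmul Amat M) Bmat a b = scale a * M (sigma a) (sigma b) / scale b"
proof -
  have inner: "matmul Amat M a l = scale a * M (sigma a) l" if "l < rk" for l
    using that assms unfolding matmul_def by (simp add: Amat_row)
  have "matmul (matmul Amat M) Bmat a b = (\<Sum>l<rk. (scale a * M (sigma a) l) * Bmat l b)"
    using assms unfolding matmul_def[of "matmul Amat M" Bmat] by (simp add: inner)
  also have "\<dots> = scale a * M (sigma a) (sigma b) / scale b"
    using Bmat_col[of "\<lambda>l. scale a * M (sigma a) l" b] assms by simp
  finally show ?thesis .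
qed

lemma Bmat_conj_entry:
  assumes "a < rk" "b < rk"
  shows "matmul (matmul Bmat M) Amat a b =
    M (sigma_inv a) (sigma_inv b) * scale (sigma_inv b) / scale (sigma_inv a)"
proof -
  have inner: "matmul Bmat M a l = M (sigma_inv a) l / scale (sigma_inv a)" if "l < rk" for l
    using that assms unfolding matmul_def by (simp add: Bmat_row)
  have "matmul (matmul Bmat M) Amat a b = (\<Sum>l<rk. (M (sigma_inv a) l / scale (sigma_inv a)) * Amat l b)"
    using assms unfolding matmul_def[of "matmul Bmat M" Amat] by (simp add: inner)
  also have "\<dots> = M (sigma_inv a) (sigma_inv b) * scale (sigma_inv b) / scale (sigma_inv a)"
    using Amat_col[of "\<lambda>l. M (sigma_inv a) l / scale (sigma_inv a)" b] assms by simp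
  finally show ?thesis .
qed

section \<open>Parity of the orthogonal groups\<close>

lemma sum_rk_expand: "(\<Sum>k<rk. f k) = f 0 + f 1 + f 2 + f 3 + f 4 + f 5 + f 6 + f 7 + f 8 + f 9 + f 10"
  by (simp add: rk_def eval_nat_numeral add.commute add.left_commute)

text \<open>In \<open>g \<in> O(N)\<close> the \<open>U\<close>-rows are even outside the \<open>U\<close>-columns: row \<open>r\<close> of \<open>g\<close> is
  row \<open>1 - r\<close> of \<open>G g = h\<^sup>T G\<close>, and all columns of \<open>G\<close> beyond the \<open>U\<close>-block are even.\<close>
lemma Orth_N_even_entries:
  assumes u: "u \<in> Orth gramN" and r: "r \<le> 1" and j: "2 \<le> j" "j < rk"
  shows "(2::int) dvd u r j"
proof -
  obtain h where h: "matsupp h" "matmul u h = idmat" "matmul h u = idmat"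
    using u unfolding Orth_def by auto
  have E: "matmul gramN u = matmul (trp h) gramN" by (rule Orth_gram_commute[OF matsupp_gramN u h])
  have r1: "1 - r < rk" unfolding rk_def by simp
  have "matmul gramN u (1 - r) j = u r j"
    using j r1 r unfolding matmul_def
    by (cases "r = 0") (auto simp: sum_rk_expand gramN_def in_e8_def le_Suc_eq)
  moreover have "2 dvd matmul (trp h) gramN (1 - r) j"
    using j r1 unfolding matmul_def trp_def gramN_def by (auto intro!: dvd_sum dvd_mult)
  ultimately show ?thesis using E by simp
qed

text \<open>\<open>E\<^sub>8\<close> is unimodular, so its Gram matrix is invertible modulo 2.\<close>
lemma E8_mod2_nondegenerate:
  fixes x :: "nat \<Rightarrow> int"
  assumes "\<And>r. 3 \<le> r \<Longrightarrow> r \<le> 10 \<Longrightarrow> 2 dvd (\<Sum>l<rk. gramN' r l * x l)"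
  shows "3 \<le> l \<Longrightarrow> l \<le> 10 \<Longrightarrow> 2 dvd x l"
proof -
  have d: "2 dvd (\<Sum>l<rk. gramN' 3 l * x l)" "2 dvd (\<Sum>l<rk. gramN' 4 l * x l)"
    "2 dvd (\<Sum>l<rk. gramN' 5 l * x l)" "2 dvd (\<Sum>l<rk. gramN' 6 l * x l)"
    "2 dvd (\<Sum>l<rk. gramN' 7 l * x l)" "2 dvd (\<Sum>l<rk. gramN' 8 l * x l)"
    "2 dvd (\<Sum>l<rk. gramN' 9 l * x l)" "2 dvd (\<Sum>l<rk. gramN' 10 l * x l)"
    by (auto intro: assms)
  note rows = d[simplified sum_rk_expand gramN'_def cartan_E8_def e8_edge_def in_e8_def, simplified]
  have "2 dvd x 3 \<and> 2 dvd x 4 \<and> 2 dvd x 5 \<and> 2 dvd x 6 \<and> 2 dvd x 7 \<and> 2 dvd x 8 \<and> 2 dvd x 9 \<and> 2 dvd x 10"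
    using rows by presburger
  moreover assume "3 \<le> l" "l \<le> 10"
  then have "l \<in> {3, 4, 5, 6, 7, 8, 9, 10}" by auto
  ultimately show ?thesis by auto
qed

lemma gramN'_quadratic_form:
  "(\<Sum>k<rk. \<Sum>l<rk. x k * gramN' k l * x l) =
    2 * x 0^2 + 4 * x 1 * x 2 - 2 * (x 3^2 + x 4^2 + x 5^2 + x 6^2 + x 7^2 + x 8^2 + x 9^2 + x 10^2)
    + 2 * (x 3 * x 4 + x 4 * x 5 + x 5 * x 6 + x 6 * x 7 + x 7 * x 8 + x 8 * x 9 + x 7 * x 10)"
  by (simp add: sum_rk_expand gramN'_def cartan_E8_def e8_edge_def in_e8_def algebra_simps power2_eq_square)

text \<open>In \<open>g \<in> O(N')\<close> the \<open>U(2)\<close>-columns are even outside the \<open>U(2)\<close>-rows.  On the \<open>E\<^sub>8\<close>-rows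
  this follows from \<open>G' g = h\<^sup>T G'\<close> (even in the \<open>U(2)\<close>-columns) and unimodularity of
  \<open>E\<^sub>8\<close>; on row 0 from isotropy of the column, which then forces \<open>x\<^sub>0\<^sup>2\<close> to be even.\<close>
lemma Orth_N'_even_entries:
  assumes u: "u \<in> Orth gramN'" and c: "c = 1 \<or> c = 2" and a: "a < rk" "a \<noteq> 1" "a \<noteq> 2"
  shows "(2::int) dvd u a c"
proof -
  obtain h where h: "matsupp h" "matmul u h = idmat" "matmul h u = idmat"
    using u unfolding Orth_def by auto
  have E: "matmul gramN' u = matmul (trp h) gramN'" by (rule Orth_gram_commute[OF matsupp_gramN' u h])
  define x where "x l = u l c" for l
  have crk: "c < rk" using c unfolding rk_def by auto
  have E8_even: "2 dvd x l" if "3 \<le> l" "l \<le> 10" for l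
  proof (rule E8_mod2_nondegenerate[OF _ that])
    fix r :: nat assume "3 \<le> r" "r \<le> 10"
    then have rr: "r < rk" unfolding rk_def by auto
    have "2 dvd matmul (trp h) gramN' r c"
      using rr crk c unfolding matmul_def trp_def gramN'_def in_e8_def by (auto intro!: dvd_sum dvd_mult)
    then have "2 dvd matmul gramN' u r c" using E by simp
    then show "2 dvd (\<Sum>l<rk. gramN' r l * x l)" using rr crk unfolding matmul_def x_def by simp
  qed
  show ?thesis
  proof (cases "a = 0")
    case False
    then show ?thesis using a E8_even unfolding rk_def x_def by auto
  next
    case True
    have "(\<Sum>k<rk. \<Sum>l<rk. u k c * gramN' k l * u l c) = gramN' c c"
      using u crk unfolding Orth_def by auto
    also have "gramN' c c = 0" using c unfolding gramN'_def in_e8_def by auto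
    finally have isotropic: "(\<Sum>k<rk. \<Sum>l<rk. x k * gramN' k l * x l) = 0" unfolding x_def .
    have "2 dvd x 3" "2 dvd x 4" "2 dvd x 5" "2 dvd x 6" "2 dvd x 7" "2 dvd x 8" "2 dvd x 9" "2 dvd x 10"
      using E8_even by auto
    then obtain y3 y4 y5 y6 y7 y8 y9 y10 where y: "x 3 = 2*y3" "x 4 = 2*y4" "x 5 = 2*y5" "x 6 = 2*y6"
      "x 7 = 2*y7" "x 8 = 2*y8" "x 9 = 2*y9" "x 10 = 2*y10"
      by (meson dvdE)
    have "x 0 * x 0 = 2 * (- x 1 * x 2 + 2*(y3^2+y4^2+y5^2+y6^2+y7^2+y8^2+y9^2+y10^2)
       - 2*(y3*y4+y4*y5+y5*y6+y6*y7+y7*y8+y8*y9+y7*y10))"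
      using isotropic unfolding gramN'_quadratic_form y by (simp add: algebra_simps power2_eq_square)
    then have "even (x 0)" by (metis dvd_triv_left even_mult_iff)
    then show ?thesis using True unfolding x_def by simp
  qed
qed

section \<open>Conjugation by \<open>Amat\<close> preserves integrality\<close>

lemma even_half_Ints: "(2::int) dvd v \<Longrightarrow> (of_int v / 2 :: complex) \<in> \<int>"
  by (elim dvdE) simp

lemma Amat_conj_integral:
  assumes g: "g \<in> Orth gramN"
  shows "\<exists>g'. ofm g' = matmul (matmul Amat (ofm g)) Bmat"
proof (rule integral_matrix[OF matsupp_matmul])
  fix a b assume ab: "a < rk" "b < rk"
  have half: "2 dvd g (sigma a) (sigma b)" if "a = 1 \<or> a = 2" "b \<noteq> 1" "b \<noteq> 2"
    using that ab sigma_lt[OF ab(2)] by (intro Orth_N_even_entries[OF g]) (auto simp: sigma_def)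
  show "matmul (matmul Amat (ofm g)) Bmat a b \<in> \<int>"
    using ab half unfolding Amat_conj_entry[OF ab] ofm_def scale_def
    by (auto simp: even_half_Ints)
qed

lemma Bmat_conj_integral:
  assumes g: "g \<in> Orth gramN'"
  shows "\<exists>g'. ofm g' = matmul (matmul Bmat (ofm g)) Amat"
proof (rule integral_matrix[OF matsupp_matmul])
  fix a b assume ab: "a < rk" "b < rk"
  have half: "2 dvd g (sigma_inv a) (sigma_inv b)" if "a \<noteq> 0" "a \<noteq> 1" "b = 0 \<or> b = 1"
    using that ab sigma_inv_lt[OF ab(1)] by (intro Orth_N'_even_entries[OF g]) (auto simp: sigma_inv_def)
  show "matmul (matmul Bmat (ofm g)) Amat a b \<in> \<int>"
    using ab half unfolding Bmat_conj_entry[OF ab] ofm_def scale_def sigma_inv_def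
    by (auto simp: even_half_Ints)
qed

theorem theorem6p2:
  shows "\<exists>A::nat \<Rightarrow> nat \<Rightarrow> complex.
     matsupp A \<and> (\<exists>B. matsupp B \<and> matmul A B = idmat \<and> matmul B A = idmat) \<and>
     (\<forall>w. supported w \<longrightarrow> (w \<in> Dcone gramN \<longleftrightarrow> cact A w \<in> Dcone gramN')) \<and>
     (\<forall>w\<in>Dcone gramN. \<forall>w'\<in>Dcone gramN.
        same_orbit gramN w w' \<longleftrightarrow> same_orbit gramN' (cact A w) (cact A w'))"
proof (rule exI[of _ Amat], intro conjI allI impI ballI)
  show "matsupp Amat" by (rule matsupp_Amat)
  show "\<exists>B. matsupp B \<and> matmul Amat B = idmat \<and> matmul B Amat = idmat"
    using matsupp_Bmat Amat_Bmat Bmat_Amat by blast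
  have real_sim: "matmul (matmul (trp Amat) (ofm gramN')) Amat = smul (of_real (1/2)) (ofm gramN)"
    using Amat_similitude by simp
  show "w \<in> Dcone gramN \<longleftrightarrow> cact Amat w \<in> Dcone gramN'" if "supported w" for w
    by (rule Dcone_transport[OF real_sim _ Amat_real that]) simp
  show "same_orbit gramN w w' \<longleftrightarrow> same_orbit gramN' (cact Amat w) (cact Amat w')"
    if "w \<in> Dcone gramN" "w' \<in> Dcone gramN" for w w'
    using that unfolding Dcone_def
    by (intro same_orbit_iff_transport[OF Amat_Bmat Bmat_Amat matsupp_Amat matsupp_Bmat
          matsupp_gramN matsupp_gramN' Amat_similitude _ Amat_conj_integral Bmat_conj_integral]) auto
qed

end
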